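(* Consider the disclosure model described in the context. Let $d,d'\in\mathcal{D}$ be distinct policies such that $d$ is more transparent than $d'$. Then $\pi_d(\theta)\ge\pi_{d'}(\theta)$ for all $\theta\in\Theta$.
   Context: Emissions lie in $E=[0,\bar e]$ with $\bar e>0$; types lie in $\Theta=[\underline\theta,\bar\theta]$. The firm's profit is $\tilde\pi(\theta,e,\tilde e)$ with actual emission $e$ and market-perceived emission $\tilde e$; it is strictly increasing in $e$ and strictly decreasing in $\tilde e$. Standing assumptions: $\tilde\pi$ is continuous on $\Theta\times E\times E$ and $C^2$ on its interior; $\pi(\theta,e):=\tilde\pi(\theta,e,e)$ is strictly concave in $e$; and $\pi(\theta,0)<\pi(\theta,\bar e)$ for all $\theta$. A disclosure policy is a function $d:E\to E$, identified with the partition of $E$ into its level sets. An emission level $e$ is belief-compatible under $d$ if $e\ge e'$ for all $e'$ with $d(e')=d(e)$; $\tilde E_d$ is the set of belief-compatible levels. The type-$\theta$ firm chooses $e\in\tilde E_d$ to maximize $\pi(\theta,e)$. $\mathcal{D}$ is the set of policies for which this maximum is attained for all $\theta$. For $d\in\mathcal{D}$, $\pi_d(\theta):=\max_{e\in\tilde E_d}\pi(\theta,e)$, and $\gamma_d(\theta)$ is the lowest maximizer. For distinct $d,d'\in\mathcal{D}$, $d$ is more transparent than $d'$ if the partition associated with $d$ is finer than that of $d'$, i.e., every cell of $d$ is contained in a cell of $d'$. *)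

theory Defs
  imports "HOL-Analysis.Analysis"
begin

definition strictly_concave_on :: "real set \<Rightarrow> (real \<Rightarrow> real) \<Rightarrow> bool" where
  "strictly_concave_on S f \<longleftrightarrow>
     (\<forall>x\<in>S. \<forall>y\<in>S. \<forall>t::real. x \<noteq> y \<and> 0 < t \<and> t < 1 \<longrightarrow>
        t * f x + (1 - t) * f y < f (t * x + (1 - t) * y))"

definition C2_on :: "('a::real_normed_vector \<Rightarrow> real) \<Rightarrow> 'a set \<Rightarrow> bool" where
  "C2_on f S \<longleftrightarrow>
     (\<exists>f' :: 'a \<Rightarrow> ('a \<Rightarrow>\<^sub>L real). \<exists>f'' :: 'a \<Rightarrow> ('a \<Rightarrow>\<^sub>L ('a \<Rightarrow>\<^sub>L real)).
        (\<forall>x\<in>S. (f has_derivative blinfun_apply (f' x)) (at x)) \<and>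
        (\<forall>x\<in>S. (f' has_derivative blinfun_apply (f'' x)) (at x)) \<and>
        continuous_on S f'')"

text \<open>Standing assumptions on the profit function pt(theta, e, e~), with E = [0, ebar],
  Theta = [thl, thu].\<close>
definition standing_assms :: "real \<Rightarrow> real \<Rightarrow> real \<Rightarrow> (real \<Rightarrow> real \<Rightarrow> real \<Rightarrow> real) \<Rightarrow> bool" where
  "standing_assms ebar thl thu pt \<longleftrightarrow>
     0 < ebar \<and> thl \<le> thu \<and>
     (\<forall>th\<in>{thl..thu}. \<forall>et\<in>{0..ebar}. \<forall>e1\<in>{0..ebar}. \<forall>e2\<in>{0..ebar}.
         e1 < e2 \<longrightarrow> pt th e1 et < pt th e2 et) \<and>
     (\<forall>th\<in>{thl..thu}. \<forall>e\<in>{0..ebar}. \<forall>e1\<in>{0..ebar}. \<forall>e2\<in>{0..ebar}.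
         e1 < e2 \<longrightarrow> pt th e e2 < pt th e e1) \<and>
     continuous_on ({thl..thu} \<times> {0..ebar} \<times> {0..ebar}) (\<lambda>(th, e, et). pt th e et) \<and>
     C2_on (\<lambda>(th, e, et). pt th e et) ({thl<..<thu} \<times> {0<..<ebar} \<times> {0<..<ebar}) \<and>
     (\<forall>th\<in>{thl..thu}. strictly_concave_on {0..ebar} (\<lambda>e. pt th e e)) \<and>
     (\<forall>th\<in>{thl..thu}. pt th 0 0 < pt th ebar ebar)"

definition pi_fun :: "(real \<Rightarrow> real \<Rightarrow> real \<Rightarrow> real) \<Rightarrow> real \<Rightarrow> real \<Rightarrow> real" where
  "pi_fun pt th e = pt th e e"

definition belief_compatible :: "real \<Rightarrow> (real \<Rightarrow> real) \<Rightarrow> real set" where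
  "belief_compatible ebar d =
     {e \<in> {0..ebar}. \<forall>e'\<in>{0..ebar}. d e' = d e \<longrightarrow> e' \<le> e}"

definition policy_class :: "real \<Rightarrow> real \<Rightarrow> real \<Rightarrow> (real \<Rightarrow> real \<Rightarrow> real \<Rightarrow> real)
     \<Rightarrow> (real \<Rightarrow> real) set" where
  "policy_class ebar thl thu pt =
     {d. d ` {0..ebar} \<subseteq> {0..ebar} \<and>
         (\<forall>th\<in>{thl..thu}. \<exists>e\<in>belief_compatible ebar d.
             \<forall>e'\<in>belief_compatible ebar d. pi_fun pt th e' \<le> pi_fun pt th e)}"

text \<open>pi_d(theta) = max over belief-compatible levels (a Sup which is attained for d in D).\<close>
definition pi_d :: "real \<Rightarrow> (real \<Rightarrow> real \<Rightarrow> real \<Rightarrow> real) \<Rightarrow> (real \<Rightarrow> real) \<Rightarrow> real \<Rightarrow> real" where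
  "pi_d ebar pt d th = Sup (pi_fun pt th ` belief_compatible ebar d)"

definition more_transparent :: "real \<Rightarrow> (real \<Rightarrow> real) \<Rightarrow> (real \<Rightarrow> real) \<Rightarrow> bool" where
  "more_transparent ebar d d' \<longleftrightarrow>
     (\<exists>e\<in>{0..ebar}. d e \<noteq> d' e) \<and>
     (\<forall>e1\<in>{0..ebar}. \<forall>e2\<in>{0..ebar}. d e1 = d e2 \<longrightarrow> d' e1 = d' e2)"

end

theory Submission
  imports Defs
begin

text \<open>A level that is maximal in its cell of a partition stays maximal in any smaller cell
  containing it, so refining the partition can only enlarge the set of belief-compatible
  levels. The firm then maximises the same profit over a larger feasible set.\<close>

lemma belief_compatible_antimono_refinement:
  assumes "\<forall>e1\<in>{0..ebar}. \<forall>e2\<in>{0..ebar}. d e1 = d e2 \<longrightarrow> d' e1 = d' e2"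
  shows "belief_compatible ebar d' \<subseteq> belief_compatible ebar d"
  using assms unfolding belief_compatible_def by fastforce

lemma policy_class_max_attained:
  assumes "d \<in> policy_class ebar thl thu pt" and "th \<in> {thl..thu}"
  shows "belief_compatible ebar d \<noteq> {}"
    and "bdd_above (pi_fun pt th ` belief_compatible ebar d)"
proof -
  obtain e where "e \<in> belief_compatible ebar d"
    and "\<forall>e'\<in>belief_compatible ebar d. pi_fun pt th e' \<le> pi_fun pt th e"
    using assms unfolding policy_class_def by blast
  then show "belief_compatible ebar d \<noteq> {}"
    and "bdd_above (pi_fun pt th ` belief_compatible ebar d)"
    by (auto intro: bdd_aboveI2)
qed

lemma pi_d_mono:
  assumes "belief_compatible ebar d' \<subseteq> belief_compatible ebar d"
    and "belief_compatible ebar d' \<noteq> {}"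
    and "bdd_above (pi_fun pt th ` belief_compatible ebar d)"
  shows "pi_d ebar pt d' th \<le> pi_d ebar pt d th"
  unfolding pi_d_def using assms by (intro cSup_subset_mono image_mono) auto

theorem lemma2:
  fixes ebar thl thu :: real and pt :: "real \<Rightarrow> real \<Rightarrow> real \<Rightarrow> real"
    and d d' :: "real \<Rightarrow> real"
  assumes "standing_assms ebar thl thu pt"
    and "d \<in> policy_class ebar thl thu pt"
    and "d' \<in> policy_class ebar thl thu pt"
    and "more_transparent ebar d d'"
  shows "\<forall>th\<in>{thl..thu}. pi_d ebar pt d th \<ge> pi_d ebar pt d' th"
proof
  fix th assume th: "th \<in> {thl..thu}"
  have "belief_compatible ebar d' \<subseteq> belief_compatible ebar d"
    using assms(4) unfolding more_transparent_def
    by (intro belief_compatible_antimono_refinement) blast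
  then show "pi_d ebar pt d th \<ge> pi_d ebar pt d' th"
    using policy_class_max_attained[OF assms(2) th] policy_class_max_attained[OF assms(3) th]
    by (intro pi_d_mono)
qed

end
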